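(* Let $(M,d)$ be a complete pointed metric space with at least three distinct points and let $g:\widetilde{M}\to\mathbb{R}$. Then $g$ is bounded and satisfies $d(x,y)g(x,y)\le d(x,u)g(x,u)+d(u,y)g(u,y)$ for all distinct $x,u,y\in M$ if and only if there exists a non-empty bounded set $A\subset\mathrm{Lip}_0(M)$ such that $g(x,y)=\sup_{f\in A}\frac{f(x)-f(y)}{d(x,y)}$ for all $(x,y)\in\widetilde{M}$. Moreover, in this case the continuous extension of $g$ to $\beta\widetilde{M}$ belongs to $G$, and $A$ can be chosen so that the supremum is always attained.
   Context: $\mathrm{Lip}_0(M)$ is the Banach space of Lipschitz $f:M\to\mathbb{R}$ with $f(0)=0$ ($0$ the base point), normed by the Lipschitz constant. $\widetilde{M}=\{(x,y)\in M\times M:x\ne y\}$, $\beta\widetilde{M}$ its Stone–Čech compactification. $G$ is the set of $g\in C(\beta\widetilde{M})$ with $d(x,y)g(x,y)\le d(x,u)g(x,u)+d(u,y)g(u,y)$ for all distinct $x,u,y\in M$. *)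

theory Defs
  imports "HOL-Analysis.Analysis"
begin

definition Mtilde :: "('a \<times> 'a) set" where
  "Mtilde = {(x, y). x \<noteq> y}"

definition Lip0 :: "'a::metric_space \<Rightarrow> ('a \<Rightarrow> real) set" where
  "Lip0 x0 = {f. (\<exists>C. C-lipschitz_on UNIV f) \<and> f x0 = 0}"

definition lip_norm :: "('a::metric_space \<Rightarrow> real) \<Rightarrow> real" where
  "lip_norm f = (SUP p\<in>Mtilde. \<bar>f (fst p) - f (snd p)\<bar> / dist (fst p) (snd p))"

definition G_ineq :: "('a::metric_space \<times> 'a \<Rightarrow> real) \<Rightarrow> bool" where
  "G_ineq g \<longleftrightarrow> (\<forall>x u y. x \<noteq> u \<and> u \<noteq> y \<and> x \<noteq> y \<longrightarrow>
      dist x y * g (x, y) \<le> dist x u * g (x, u) + dist u y * g (u, y))"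

definition sup_repr :: "('a::metric_space \<Rightarrow> real) set \<Rightarrow> ('a \<times> 'a \<Rightarrow> real) \<Rightarrow> bool" where
  "sup_repr A g \<longleftrightarrow> (\<forall>x y. x \<noteq> y \<longrightarrow>
      g (x, y) = (SUP f\<in>A. (f x - f y) / dist x y))"

end

theory Submission
  imports Defs
begin

(* Put rho(x,y) = d(x,y) g(x,y). The inequality defining G is the triangle inequality for rho,
   and with a third point w at hand, adding four instances of it through w gives
   rho(x,u) + rho(u,x) >= 0, so it extends to all triples. If |g| <= B, then the functions
   f_q = rho(-,q) - rho(0,q) are B-Lipschitz, f_q(x) - f_q(y) <= rho(x,y) by the triangle
   inequality, with equality for q = y: so g is the supremum, attained, of the slopes of the f_q.
   Conversely, a supremum of slopes of uniformly Lipschitz functions is bounded and inherits the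
   triangle inequality. Continuity holds because rho is 2B-Lipschitz on M x M. *)

definition weighted_dist :: "('a::metric_space \<times> 'a \<Rightarrow> real) \<Rightarrow> 'a \<Rightarrow> 'a \<Rightarrow> real" where
  "weighted_dist g x y = dist x y * g (x, y)"

lemma weighted_dist_self [simp]: "weighted_dist g x x = 0"
  by (simp add: weighted_dist_def)

lemma bounded_imp_weighted_dist_le:
  assumes "bounded (g ` Mtilde)"
  obtains B where "0 \<le> B" and "\<And>x y. \<bar>weighted_dist g x y\<bar> \<le> B * dist x y"
proof -
  obtain B where "0 < B" and B: "\<And>p. p \<in> Mtilde \<Longrightarrow> \<bar>g p\<bar> \<le> B"
    using assms unfolding bounded_pos by auto
  show ?thesis
  proof (rule that)
    show "0 \<le> B" using \<open>0 < B\<close> by simp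
  next
    fix x y
    show "\<bar>weighted_dist g x y\<bar> \<le> B * dist x y"
    proof (cases "x = y")
      case False
      then have "\<bar>g (x, y)\<bar> * dist x y \<le> B * dist x y"
        using B by (intro mult_right_mono) (auto simp: Mtilde_def)
      then show ?thesis by (simp add: weighted_dist_def abs_mult mult.commute)
    qed simp
  qed
qed

lemma G_ineqD:
  assumes "G_ineq g" "x \<noteq> u" "u \<noteq> y" "x \<noteq> y"
  shows "weighted_dist g x y \<le> weighted_dist g x u + weighted_dist g u y"
  using assms unfolding G_ineq_def weighted_dist_def by blast

lemma obtain_point_avoiding:
  assumes "\<exists>a b c::'a. a \<noteq> b \<and> b \<noteq> c \<and> a \<noteq> c"
  obtains w :: 'a where "w \<noteq> x" "w \<noteq> u"
proof -
  obtain a b c :: 'a where "a \<noteq> b" "b \<noteq> c" "a \<noteq> c" using assms by blast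
  then show ?thesis using that by (cases "a = x \<or> a = u"; cases "b = x \<or> b = u") fastforce+
qed

lemma weighted_dist_cycle_nonneg:
  fixes g :: "'a::metric_space \<times> 'a \<Rightarrow> real"
  assumes three: "\<exists>a b c::'a. a \<noteq> b \<and> b \<noteq> c \<and> a \<noteq> c" and G: "G_ineq g"
  shows "0 \<le> weighted_dist g x u + weighted_dist g u x"
proof (cases "x = u")
  case False
  obtain w where "w \<noteq> x" "w \<noteq> u"
    using obtain_point_avoiding[OF three] .
  with False have "weighted_dist g x w \<le> weighted_dist g x u + weighted_dist g u w"
    and "weighted_dist g w x \<le> weighted_dist g w u + weighted_dist g u x"
    and "weighted_dist g u w \<le> weighted_dist g u x + weighted_dist g x w"
    and "weighted_dist g w u \<le> weighted_dist g w x + weighted_dist g x u"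
    by (auto intro!: G_ineqD[OF G])
  then show ?thesis by linarith
qed simp

lemma weighted_dist_triangle:
  fixes g :: "'a::metric_space \<times> 'a \<Rightarrow> real"
  assumes three: "\<exists>a b c::'a. a \<noteq> b \<and> b \<noteq> c \<and> a \<noteq> c" and G: "G_ineq g"
  shows "weighted_dist g x y \<le> weighted_dist g x u + weighted_dist g u y"
proof -
  consider "x = y" | "x = u \<or> u = y" | "x \<noteq> u" "u \<noteq> y" "x \<noteq> y" by blast
  then show ?thesis
  proof cases
    case 1
    then show ?thesis using weighted_dist_cycle_nonneg[OF three G, of x u] by simp
  next
    case 2
    then show ?thesis by auto
  next
    case 3
    then show ?thesis using G_ineqD[OF G] by blast
  qed
qed

lemma abs_slope_le_lip_norm:
  assumes "C-lipschitz_on UNIV f" "x \<noteq> y"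
  shows "\<bar>f x - f y\<bar> / dist x y \<le> lip_norm f"
proof -
  have "\<bar>f (fst p) - f (snd p)\<bar> / dist (fst p) (snd p) \<le> C" if "p \<in> Mtilde" for p
  proof -
    have "\<bar>f (fst p) - f (snd p)\<bar> \<le> C * dist (fst p) (snd p)"
      using lipschitz_onD[OF assms(1)] by (metis UNIV_I dist_real_def)
    moreover have "dist (fst p) (snd p) > 0" using that by (auto simp: Mtilde_def)
    ultimately show ?thesis by (simp add: divide_le_eq)
  qed
  then have "bdd_above ((\<lambda>p. \<bar>f (fst p) - f (snd p)\<bar> / dist (fst p) (snd p)) ` Mtilde)"
    by (rule bdd_aboveI2)
  moreover have "(x, y) \<in> Mtilde" using assms(2) by (simp add: Mtilde_def)
  ultimately have "\<bar>f (fst (x, y)) - f (snd (x, y))\<bar> / dist (fst (x, y)) (snd (x, y)) \<le> lip_norm f"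
    unfolding lip_norm_def by (intro cSUP_upper)
  then show ?thesis by simp
qed

lemma lip_norm_le:
  fixes f :: "'a::metric_space \<Rightarrow> real" and x y :: 'a
  assumes "B-lipschitz_on UNIV f" and "x \<noteq> y"
  shows "lip_norm f \<le> B"
  unfolding lip_norm_def
proof (rule cSUP_least)
  have "(x, y) \<in> Mtilde" using assms(2) by (simp add: Mtilde_def)
  then show "Mtilde \<noteq> ({} :: ('a \<times> 'a) set)" by blast
next
  fix p :: "'a \<times> 'a" assume "p \<in> Mtilde"
  then have "dist (fst p) (snd p) > 0" by (auto simp: Mtilde_def)
  moreover have "\<bar>f (fst p) - f (snd p)\<bar> \<le> B * dist (fst p) (snd p)"
    using lipschitz_onD[OF assms(1), of "fst p" "snd p"] by (simp add: dist_real_def)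
  ultimately show "\<bar>f (fst p) - f (snd p)\<bar> / dist (fst p) (snd p) \<le> B"
    by (simp add: divide_le_eq)
qed

lemma sup_repr_increment_le:
  assumes "sup_repr A g" "f \<in> A" "x \<noteq> y"
    and "\<And>f. f \<in> A \<Longrightarrow> (f x - f y) / dist x y \<le> L"
  shows "f x - f y \<le> weighted_dist g x y"
proof -
  have "(f x - f y) / dist x y \<le> g (x, y)"
    using assms unfolding sup_repr_def by (auto intro!: cSUP_upper bdd_aboveI2)
  with \<open>x \<noteq> y\<close> show ?thesis by (simp add: weighted_dist_def divide_le_eq mult.commute)
qed

lemma sup_repr_bounded_G_ineq:
  assumes "A \<noteq> {}" "sup_repr A g"
    and slope: "\<And>f x y. f \<in> A \<Longrightarrow> x \<noteq> y \<Longrightarrow> (f x - f y) / dist x y \<le> L"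
  shows "bounded (g ` Mtilde) \<and> G_ineq g"
proof -
  have increment_le: "f x - f y \<le> weighted_dist g x y" if "f \<in> A" "x \<noteq> y" for f x y
    using sup_repr_increment_le[OF assms(2) that slope[OF _ that(2)]] .
  have "\<bar>g (x, y)\<bar> \<le> L" if xy: "x \<noteq> y" for x y
  proof -
    obtain f where f: "f \<in> A" using assms(1) by blast
    have "g (x, y) \<le> L"
      using assms(1,2) slope xy unfolding sup_repr_def by (auto intro!: cSUP_least)
    moreover have "- L * dist x y \<le> g (x, y) * dist x y"
      using slope[OF f, of y x] increment_le[OF f xy] xy
      by (simp add: divide_le_eq dist_commute weighted_dist_def mult.commute)
    then have "- L \<le> g (x, y)"
      by (rule mult_right_le_imp_le) (use xy in simp)
    ultimately show ?thesis by linarith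
  qed
  then have "bounded (g ` Mtilde)"
    unfolding bounded_iff by (auto simp: Mtilde_def)
  moreover have "G_ineq g"
    unfolding G_ineq_def
  proof (intro allI impI, elim conjE)
    fix x u y :: 'a assume "x \<noteq> u" "u \<noteq> y" "x \<noteq> y"
    let ?R = "weighted_dist g x u + weighted_dist g u y"
    have "(f x - f y) / dist x y \<le> ?R / dist x y" if f: "f \<in> A" for f
      using increment_le[OF f \<open>x \<noteq> u\<close>] increment_le[OF f \<open>u \<noteq> y\<close>]
      by (intro divide_right_mono) auto
    then have "g (x, y) \<le> ?R / dist x y"
      using assms(1,2) \<open>x \<noteq> y\<close> unfolding sup_repr_def by (auto intro!: cSUP_least)
    with \<open>x \<noteq> y\<close> show "dist x y * g (x, y) \<le> dist x u * g (x, u) + dist u y * g (u, y)"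
      by (simp add: weighted_dist_def le_divide_eq mult.commute)
  qed
  ultimately show ?thesis ..
qed

definition based_weighted_dist :: "('a::metric_space \<times> 'a \<Rightarrow> real) \<Rightarrow> 'a \<Rightarrow> 'a \<Rightarrow> 'a \<Rightarrow> real" where
  "based_weighted_dist g x0 q z = weighted_dist g z q - weighted_dist g x0 q"

lemma based_weighted_dist_slope_self:
  "x \<noteq> y \<Longrightarrow> (based_weighted_dist g x0 y x - based_weighted_dist g x0 y y) / dist x y = g (x, y)"
  by (simp add: based_weighted_dist_def weighted_dist_def)

context
  fixes g :: "'a::metric_space \<times> 'a \<Rightarrow> real" and x0 :: 'a and B :: real
  assumes triangle: "\<And>x u y. weighted_dist g x y \<le> weighted_dist g x u + weighted_dist g u y"
    and bound: "\<And>x y. \<bar>weighted_dist g x y\<bar> \<le> B * dist x y"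
begin

lemma based_weighted_dist_diff_le:
  "based_weighted_dist g x0 q x - based_weighted_dist g x0 q y \<le> weighted_dist g x y"
  using triangle[of x q y] by (simp add: based_weighted_dist_def)

lemma based_weighted_dist_lipschitz:
  assumes "0 \<le> B"
  shows "B-lipschitz_on UNIV (based_weighted_dist g x0 q)"
proof (rule lipschitz_onI[OF _ assms])
  fix x y
  have "based_weighted_dist g x0 q x - based_weighted_dist g x0 q y \<le> B * dist x y"
    using based_weighted_dist_diff_le[of q x y] bound[of x y] by linarith
  moreover have "based_weighted_dist g x0 q y - based_weighted_dist g x0 q x \<le> B * dist x y"
    using based_weighted_dist_diff_le[of q y x] bound[of y x] by (simp add: dist_commute)
  ultimately show "dist (based_weighted_dist g x0 q x) (based_weighted_dist g x0 q y) \<le> B * dist x y"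
    by (simp add: dist_real_def)
qed

lemma sup_repr_based_weighted_dist:
  "sup_repr (range (based_weighted_dist g x0)) g"
  unfolding sup_repr_def
proof (intro allI impI)
  fix x y :: 'a assume xy: "x \<noteq> y"
  let ?slope = "\<lambda>q. (based_weighted_dist g x0 q x - based_weighted_dist g x0 q y) / dist x y"
  have "?slope q \<le> g (x, y)" for q
    using based_weighted_dist_diff_le[of q x y] xy
    by (simp add: weighted_dist_def divide_le_eq mult.commute)
  moreover have "?slope y = g (x, y)"
    using xy by (rule based_weighted_dist_slope_self)
  ultimately have "(SUP q. ?slope q) = g (x, y)"
    by (intro antisym cSUP_least cSUP_upper2[where x = y] bdd_aboveI2) auto
  then show "g (x, y) = (SUP f\<in>range (based_weighted_dist g x0). (f x - f y) / dist x y)"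
    by (simp add: image_image)
qed

lemma weighted_dist_lipschitz:
  assumes "0 \<le> B"
  shows "(2 * B)-lipschitz_on UNIV (\<lambda>p. weighted_dist g (fst p) (snd p))"
proof (rule lipschitz_onI)
  fix p q :: "'a \<times> 'a"
  obtain x y x' y' where pq: "p = (x, y)" "q = (x', y')" by fastforce
  have near: "weighted_dist g a b \<le> B * dist p q" if "dist a b \<le> dist p q" for a b
    using abs_le_D1[OF bound[of a b]] mult_left_mono[OF that assms] by linarith
  have "dist x x' \<le> dist p q" "dist x' x \<le> dist p q" "dist y y' \<le> dist p q" "dist y' y \<le> dist p q"
    using dist_fst_le[of p q] dist_snd_le[of p q] by (simp_all add: pq dist_commute)
  note near = near[OF this(1)] near[OF this(2)] near[OF this(3)] near[OF this(4)]
  have "weighted_dist g x y \<le> weighted_dist g x x' + weighted_dist g x' y' + weighted_dist g y' y"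
    using triangle[of x y x'] triangle[of x' y y'] by linarith
  moreover have "weighted_dist g x' y' \<le> weighted_dist g x' x + weighted_dist g x y + weighted_dist g y y'"
    using triangle[of x' y' x] triangle[of x y' y] by linarith
  ultimately have "\<bar>weighted_dist g x y - weighted_dist g x' y'\<bar> \<le> 2 * B * dist p q"
    using near by (intro abs_leI) linarith+
  then show "dist (weighted_dist g (fst p) (snd p)) (weighted_dist g (fst q) (snd q)) \<le> 2 * B * dist p q"
    by (simp add: pq dist_real_def)
qed (use assms in simp)

lemma continuous_on_Mtilde:
  assumes "0 \<le> B"
  shows "continuous_on Mtilde g"
proof -
  have "continuous_on Mtilde (\<lambda>p. weighted_dist g (fst p) (snd p))"
    using lipschitz_on_continuous_on[OF weighted_dist_lipschitz[OF assms]] continuous_on_subset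
    by blast
  moreover have "continuous_on Mtilde (\<lambda>p. dist (fst p) (snd p))"
    by (intro continuous_intros)
  ultimately have "continuous_on Mtilde (\<lambda>p. weighted_dist g (fst p) (snd p) / dist (fst p) (snd p))"
    by (rule continuous_on_divide) (auto simp: Mtilde_def)
  then show ?thesis
    by (rule continuous_on_eq) (auto simp: Mtilde_def weighted_dist_def)
qed

end

lemma bounded_G_ineq_imp_continuous_on:
  fixes g :: "'a::metric_space \<times> 'a \<Rightarrow> real"
  assumes three: "\<exists>a b c::'a. a \<noteq> b \<and> b \<noteq> c \<and> a \<noteq> c"
    and "bounded (g ` Mtilde)" and G: "G_ineq g"
  shows "continuous_on Mtilde g"
proof -
  obtain B where "0 \<le> B" "\<And>x y. \<bar>weighted_dist g x y\<bar> \<le> B * dist x y"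
    using bounded_imp_weighted_dist_le[OF assms(2)] by blast
  then show ?thesis by (intro continuous_on_Mtilde[OF weighted_dist_triangle[OF three G]])
qed

lemma bounded_G_ineq_imp_sup_repr:
  fixes x0 :: "'a::metric_space" and g :: "'a \<times> 'a \<Rightarrow> real"
  assumes three: "\<exists>a b c::'a. a \<noteq> b \<and> b \<noteq> c \<and> a \<noteq> c"
    and "bounded (g ` Mtilde)" and G: "G_ineq g"
  shows "\<exists>A. A \<noteq> {} \<and> A \<subseteq> Lip0 x0 \<and> bdd_above (lip_norm ` A) \<and> sup_repr A g \<and>
           (\<forall>x y. x \<noteq> y \<longrightarrow> (\<exists>f\<in>A. g (x, y) = (f x - f y) / dist x y))"
proof -
  obtain B where nonneg: "0 \<le> B" and bound: "\<And>x y. \<bar>weighted_dist g x y\<bar> \<le> B * dist x y"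
    using bounded_imp_weighted_dist_le[OF assms(2)] by blast
  note triangle = weighted_dist_triangle[OF three G]
  define A where "A = range (based_weighted_dist g x0)"
  obtain a b :: 'a where "a \<noteq> b" using three by blast
  have lipschitz: "f \<in> A \<Longrightarrow> B-lipschitz_on UNIV f" for f
    using based_weighted_dist_lipschitz[OF triangle bound nonneg] by (auto simp: A_def)
  have "A \<subseteq> Lip0 x0"
    using lipschitz by (auto simp: A_def Lip0_def based_weighted_dist_def)
  moreover have "bdd_above (lip_norm ` A)"
    using lip_norm_le[OF lipschitz \<open>a \<noteq> b\<close>] by (rule bdd_aboveI2)
  moreover have "\<exists>f\<in>A. g (x, y) = (f x - f y) / dist x y" if "x \<noteq> y" for x y
  proof -
    have "g (x, y) = (based_weighted_dist g x0 y x - based_weighted_dist g x0 y y) / dist x y"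
      using based_weighted_dist_slope_self[OF that] by simp
    then show ?thesis unfolding A_def by blast
  qed
  moreover have "sup_repr A g"
    unfolding A_def by (rule sup_repr_based_weighted_dist[OF triangle bound])
  moreover have "A \<noteq> {}"
    by (simp add: A_def)
  ultimately show ?thesis by blast
qed

lemma sup_repr_Lip0_imp_bounded_G_ineq:
  assumes "A \<noteq> {}" "A \<subseteq> Lip0 x0" "bdd_above (lip_norm ` A)" "sup_repr A g"
  shows "bounded (g ` Mtilde) \<and> G_ineq g"
proof -
  obtain L where L: "\<And>f. f \<in> A \<Longrightarrow> lip_norm f \<le> L"
    using assms(3) unfolding bdd_above_def by blast
  have slope: "(f x - f y) / dist x y \<le> L" if f: "f \<in> A" and xy: "x \<noteq> y" for f x y
  proof -
    obtain C where "C-lipschitz_on UNIV f" using f assms(2) by (auto simp: Lip0_def)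
    then have "\<bar>f x - f y\<bar> / dist x y \<le> L"
      using abs_slope_le_lip_norm[OF _ xy] L[OF f] by (meson order_trans)
    moreover have "(f x - f y) / dist x y \<le> \<bar>f x - f y\<bar> / dist x y"
      by (intro divide_right_mono) simp_all
    ultimately show ?thesis by linarith
  qed
  show ?thesis by (rule sup_repr_bounded_G_ineq[OF assms(1,4) slope])
qed

theorem proposition2p7:
  fixes x0 :: "'a::{metric_space, complete_space}"
    and g :: "'a \<times> 'a \<Rightarrow> real"
  assumes three: "\<exists>a b c::'a. a \<noteq> b \<and> b \<noteq> c \<and> a \<noteq> c"
  shows "((bounded (g ` Mtilde) \<and> G_ineq g) \<longleftrightarrow>
           (\<exists>A. A \<noteq> {} \<and> A \<subseteq> Lip0 x0 \<and> bdd_above (lip_norm ` A) \<and> sup_repr A g))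
       \<and> ((bounded (g ` Mtilde) \<and> G_ineq g) \<longrightarrow>
           continuous_on Mtilde g \<and>
           (\<exists>A. A \<noteq> {} \<and> A \<subseteq> Lip0 x0 \<and> bdd_above (lip_norm ` A) \<and> sup_repr A g \<and>
                (\<forall>x y. x \<noteq> y \<longrightarrow> (\<exists>f\<in>A. g (x, y) = (f x - f y) / dist x y))))"
  by (meson bounded_G_ineq_imp_continuous_on[OF three] bounded_G_ineq_imp_sup_repr[OF three]
      sup_repr_Lip0_imp_bounded_G_ineq)

end
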